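(* Let $(x_k)_{k\ge0}$ be an arbitrary sequence of numbers (or indeterminates), define $a_n=x_n$ if $n=2^k-1$ for some integer $k\ge0$ and $a_n=0$ otherwise, and let $d(n)=\det\left(a_{i+j}\right)_{i,j=0}^{n-1}$ with $d(0)=1$. Then $d(0)=1$, $d(1)=x_0$, $d(2)=-x_1^2$, and for all integers $k,n$ with $1<2^{k-1}<n\le 2^k$, $$d(n)=(-1)^n x_{2^k-1}^{2n-2^k}\,d(2^k-n).$$ *)

theory Defs
  imports "Jordan_Normal_Form.Determinant"
begin

definition hseq :: "(nat \<Rightarrow> 'a::comm_ring_1) \<Rightarrow> nat \<Rightarrow> 'a" where
  "hseq x m = (if \<exists>k::nat. m = 2 ^ k - 1 then x m else 0)"

definition hdet :: "(nat \<Rightarrow> 'a::comm_ring_1) \<Rightarrow> nat \<Rightarrow> 'a" where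
  "hdet x n = det (mat n n (\<lambda>(i, j). hseq x (i + j)))"

end

theory Submission
  imports Defs
begin

text \<open>The sequence a vanishes on [2^(k-1), 2^(k+1) - 2] except for a_{2^k - 1}. So for
  2^(k-1) < n \<le> 2^k the order-n Hankel matrix is zero in the region i + j \<ge> 2^(k-1) off the
  antidiagonal i + j = 2^k - 1. In the Leibniz expansion every nonvanishing term then maps each
  row i \<ge> m = 2^k - n to the column 2^k - 1 - i, i.e. its permutation is a permutation of
  {0..<m} composed with the reversal of {m..<n}. The reversal has sign (-1)^((n - m) div 2) = (-1)^n,
  and what remains is x_{2^k - 1}^(n - m) times the Hankel determinant of order m.\<close>

definition rev_interval :: "nat \<Rightarrow> nat \<Rightarrow> nat \<Rightarrow> nat" where
  "rev_interval a b i = (if a \<le> i \<and> i < b then a + b - 1 - i else i)"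

lemma rev_interval_involution: "rev_interval a b (rev_interval a b i) = i"
  by (auto simp: rev_interval_def)

lemma rev_interval_permutes: "rev_interval a b permutes {a..<b}"
  unfolding permutes_def
  by (metis rev_interval_involution rev_interval_def atLeastLessThan_iff)

lemma sign_rev_interval: "sign (rev_interval a b) = (-1) ^ ((b - a) div 2)"
proof (induction "b - a" arbitrary: a b rule: less_induct)
  case less
  show ?case
  proof (cases "b \<le> a + 1")
    case True
    then have "rev_interval a b = id" by (auto simp: rev_interval_def fun_eq_iff)
    with True show ?thesis by (simp add: sign_id)
  next
    case False
    have decompose: "rev_interval a b = Transposition.transpose a (b - 1) \<circ> rev_interval (a + 1) (b - 1)"
      using False by (auto simp: rev_interval_def transpose_def fun_eq_iff)
    have "sign (rev_interval a b) = sign (Transposition.transpose a (b - 1)) * sign (rev_interval (a + 1) (b - 1))"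
      unfolding decompose
      by (rule sign_compose) (auto intro: permutation_swap_id permutes_imp_permutation rev_interval_permutes)
    also have "\<dots> = - ((-1) ^ ((b - 1 - (a + 1)) div 2))"
      using False less[of "b - 1" "a + 1"] by (simp add: sign_swap_id)
    also have "\<dots> = (-1) ^ ((b - a) div 2)"
    proof -
      have "(b - a) div 2 = Suc ((b - 1 - (a + 1)) div 2)" using False by simp
      then show ?thesis by simp
    qed
    finally show ?thesis .
  qed
qed

lemma hseq_eq_0_between_powers:
  assumes "2 ^ k \<le> t" "t < 2 ^ (k + 2) - 1" "t \<noteq> 2 ^ (k + 1) - 1"
  shows "hseq x t = 0"
proof -
  have "t \<noteq> 2 ^ i - 1" for i
  proof
    assume t: "t = 2 ^ i - 1"
    have "(1::nat) \<le> 2 ^ i" by simp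
    then have "(2::nat) ^ k < 2 ^ i" "(2::nat) ^ i < 2 ^ (k + 2)"
      using assms(1,2) t by linarith+
    then have "k < i" "i < k + 2"
      by (auto intro: power_less_imp_less_exp[of "2::nat"])
    then have "i = k + 1" by simp
    with assms(3) t show False by simp
  qed
  then show ?thesis by (simp add: hseq_def)
qed

lemma permutes_compose_rev_interval:
  assumes p: "p permutes {0..<n}" and rev: "\<And>i. m \<le> i \<Longrightarrow> i < n \<Longrightarrow> p i = rev_interval m n i"
  shows "p \<circ> rev_interval m n permutes {0..<m}"
proof (rule permutes_superset)
  have "rev_interval m n permutes {0..<n}"
    by (rule permutes_subset[OF rev_interval_permutes]) auto
  then show "p \<circ> rev_interval m n permutes {0..<n}"
    by (rule permutes_compose[OF _ p])
  show "(p \<circ> rev_interval m n) i = i" if "i \<in> {0..<n} - {0..<m}" for i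
    using that rev[of "rev_interval m n i"] rev_interval_involution[of m n i]
    by (auto simp: rev_interval_def)
qed

lemma prod_compose_rev_interval:
  fixes f :: "nat \<Rightarrow> nat \<Rightarrow> 'a::comm_monoid_mult"
  assumes q: "q permutes {0..<m}" and "m \<le> n"
  shows "(\<Prod>i = 0..<n. f i ((q \<circ> rev_interval m n) i))
    = (\<Prod>i = 0..<m. f i (q i)) * (\<Prod>i = m..<n. f i (n + m - 1 - i))"
proof -
  have "(\<Prod>i = 0..<m. f i ((q \<circ> rev_interval m n) i)) = (\<Prod>i = 0..<m. f i (q i))"
    by (rule prod.cong) (auto simp: rev_interval_def)
  moreover have "(\<Prod>i = m..<n. f i ((q \<circ> rev_interval m n) i)) = (\<Prod>i = m..<n. f i (n + m - 1 - i))"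
    by (rule prod.cong) (auto simp: rev_interval_def permutes_not_in[OF q] add.commute)
  ultimately show ?thesis
    using prod.atLeastLessThan_concat[of 0 m n "\<lambda>i. f i ((q \<circ> rev_interval m n) i)"] \<open>m \<le> n\<close>
    by simp
qed

lemma permutation_term_forced_antidiagonal:
  fixes A :: "'a::comm_ring_1 mat"
  assumes "m \<le> h" "2 * h \<le> n + m"
    and zero: "\<And>i j. i < n \<Longrightarrow> j < n \<Longrightarrow> h \<le> i + j \<Longrightarrow> i + j \<noteq> n + m - 1 \<Longrightarrow> A $$ (i, j) = 0"
    and p: "p permutes {0..<n}" and nonzero: "(\<Prod>i = 0..<n. A $$ (i, p i)) \<noteq> 0"
    and i: "m \<le> i" "i < n"
  shows "p i = rev_interval m n i"
proof -
  have p_lt: "p j < n" if "j < n" for j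
    using permutes_in_image[OF p] that by simp
  have on_antidiagonal: "j + p j = n + m - 1" if j: "j < n" "h \<le> j + p j" for j
  proof (rule ccontr)
    assume "j + p j \<noteq> n + m - 1"
    then have "A $$ (j, p j) = 0" using zero j p_lt by blast
    then have "(\<Prod>i = 0..<n. A $$ (i, p i)) = 0" using j(1) by (intro prod_zero) auto
    with nonzero show False by simp
  qed
  show ?thesis
  proof (cases "h \<le> i")
    case True
    with on_antidiagonal[of i] i show ?thesis by (simp add: rev_interval_def)
  next
    case False
    define j where "j = n + m - 1 - i"
    have j: "h \<le> j" "j < n" using False i assms(1,2) by (auto simp: j_def)
    then have "j \<in> p ` {0..<n}" using permutes_image[OF p] by simp
    then obtain i' where i': "i' < n" "p i' = j" by auto
    with on_antidiagonal[of i'] j have "i' + j = n + m - 1" by simp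
    then have "i' = i" using i unfolding j_def by linarith
    with i' i show ?thesis by (simp add: rev_interval_def j_def)
  qed
qed

lemma det_antidiagonal_split:
  fixes A :: "'a::comm_ring_1 mat"
  assumes A: "A \<in> carrier_mat n n" and "m \<le> h" "2 * h \<le> n + m"
    and zero: "\<And>i j. i < n \<Longrightarrow> j < n \<Longrightarrow> h \<le> i + j \<Longrightarrow> i + j \<noteq> n + m - 1 \<Longrightarrow> A $$ (i, j) = 0"
  shows "det A = (-1) ^ ((n - m) div 2) * (\<Prod>i = m..<n. A $$ (i, n + m - 1 - i))
    * det (mat m m (\<lambda>(i, j). A $$ (i, j)))"
proof -
  define r where "r = rev_interval m n"
  define c :: 'a where "c = (-1) ^ ((n - m) div 2) * (\<Prod>i = m..<n. A $$ (i, n + m - 1 - i))"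
  define t where "t p = signof p * (\<Prod>i = 0..<n. A $$ (i, p i))" for p
  define P where "P k = {p. p permutes {0..<k}}" for k :: nat
  have "m \<le> n" using assms(2,3) by linarith
  have r: "r permutes {0..<n}"
    unfolding r_def by (rule permutes_subset[OF rev_interval_permutes]) auto
  have rr: "q \<circ> r \<circ> r = q" for q :: "nat \<Rightarrow> nat"
    by (simp add: fun_eq_iff r_def rev_interval_involution)
  have image_P: "(\<lambda>q. q \<circ> r) ` P m \<subseteq> P n"
    using \<open>m \<le> n\<close> by (auto simp: P_def intro!: permutes_compose[OF r] permutes_subset[of _ "{0..<m}"])
  have vanish: "t p = 0" if "p \<in> P n - (\<lambda>q. q \<circ> r) ` P m" for p
  proof (rule ccontr)
    assume "t p \<noteq> 0"
    then have "(\<Prod>i = 0..<n. A $$ (i, p i)) \<noteq> 0" by (auto simp: t_def)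
    with that assms(2-4) have "p \<circ> r \<in> P m"
      unfolding P_def r_def
      by (auto intro!: permutes_compose_rev_interval permutation_term_forced_antidiagonal)
    then have "p \<in> (\<lambda>q. q \<circ> r) ` P m" by (metis rr image_eqI)
    with that show False by simp
  qed
  have t_compose: "t (q \<circ> r) = c * (signof q * (\<Prod>i = 0..<m. A $$ (i, q i)))" if "q \<in> P m" for q
  proof -
    have q: "q permutes {0..<m}" using that by (simp add: P_def)
    have "sign (q \<circ> r) = sign q * sign r"
      using q r by (intro sign_compose) (auto intro: permutes_imp_permutation)
    then show ?thesis
      using prod_compose_rev_interval[OF q \<open>m \<le> n\<close>, of "\<lambda>i j. A $$ (i, j)"]
      by (simp add: t_def c_def r_def sign_rev_interval ac_simps)
  qed
  have "det A = sum t (P n)" unfolding t_def P_def by (rule det_def'[OF A])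
  also have "\<dots> = sum t ((\<lambda>q. q \<circ> r) ` P m)"
    using image_P vanish by (intro sum.mono_neutral_right) (auto simp: P_def finite_permutations)
  also have "\<dots> = sum (\<lambda>q. t (q \<circ> r)) (P m)"
    by (rule sum.reindex_cong[OF inj_on_inverseI[where g = "\<lambda>q. q \<circ> r"]]) (simp_all add: rr)
  also have "\<dots> = c * det (mat m m (\<lambda>(i, j). A $$ (i, j)))"
    by (simp add: det_def'[of _ m] P_def sum_distrib_left t_compose)
  finally show ?thesis by (simp add: c_def)
qed

lemma hseq_mersenne: "hseq x (2 ^ k - 1) = x (2 ^ k - 1)"
  by (auto simp: hseq_def)

lemma hdet_antidiagonal_reduction:
  assumes "m \<le> h" "2 * h \<le> n + m"
    and gap: "\<And>t. h \<le> t \<Longrightarrow> t \<le> 2 * n - 2 \<Longrightarrow> t \<noteq> n + m - 1 \<Longrightarrow> hseq x t = 0"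
  shows "hdet x n = (-1) ^ ((n - m) div 2) * hseq x (n + m - 1) ^ (n - m) * hdet x m"
proof -
  let ?A = "mat n n (\<lambda>(i, j). hseq x (i + j))"
  have "m \<le> n" using assms(1,2) by linarith
  have "hdet x n = (-1) ^ ((n - m) div 2) * (\<Prod>i = m..<n. ?A $$ (i, n + m - 1 - i))
      * det (mat m m (\<lambda>(i, j). ?A $$ (i, j)))"
    unfolding hdet_def by (rule det_antidiagonal_split) (use assms in auto)
  also have "(\<Prod>i = m..<n. ?A $$ (i, n + m - 1 - i)) = hseq x (n + m - 1) ^ (n - m)"
    by (subst prod.cong[OF refl, where h = "\<lambda>_. hseq x (n + m - 1)"]) auto
  also have "mat m m (\<lambda>(i, j). ?A $$ (i, j)) = mat m m (\<lambda>(i, j). hseq x (i + j))"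
    using \<open>m \<le> n\<close> by (intro eq_matI) auto
  finally show ?thesis by (simp add: hdet_def)
qed

lemma hdet_power_of_two_reduction:
  assumes "1 \<le> j" "2 ^ j < n" "n \<le> 2 ^ (j + 1)"
  shows "hdet x n = (-1) ^ n * x (2 ^ (j + 1) - 1) ^ (2 * n - 2 ^ (j + 1)) * hdet x (2 ^ (j + 1) - n)"
proof -
  define H :: nat where "H = 2 ^ j"
  have H: "2 ^ (j + 1) = 2 * H" "H < n" "n \<le> 2 * H" "even H"
    using assms by (auto simp: H_def)
  have gap: "hseq x t = 0" if "H \<le> t" "t \<le> 2 * n - 2" "t \<noteq> n + (2 * H - n) - 1" for t
    using that H hseq_eq_0_between_powers[of j t x] by (simp add: H_def)
  have "hdet x n = (-1) ^ ((n - (2 * H - n)) div 2) * hseq x (n + (2 * H - n) - 1) ^ (n - (2 * H - n))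
      * hdet x (2 * H - n)"
    using H gap by (intro hdet_antidiagonal_reduction[where h = H]) auto
  also have "(-1) ^ ((n - (2 * H - n)) div 2) = ((-1) ^ n :: 'a)"
  proof -
    have "(n - (2 * H - n)) div 2 + H = n" using H by auto
    then show ?thesis using \<open>even H\<close> by (metis power_add neg_one_even_power mult_1_right)
  qed
  finally show ?thesis
    using H hseq_mersenne[of x "j + 1"] by (simp add: algebra_simps mult_2_right)
qed

theorem theorem4p5:
  fixes x :: "nat \<Rightarrow> 'a::comm_ring_1"
  shows "hdet x 0 = 1 \<and> hdet x 1 = x 0 \<and> hdet x 2 = - (x 1 ^ 2) \<and>
    (\<forall>k n. 1 < (2::nat) ^ (k - 1) \<and> 2 ^ (k - 1) < n \<and> n \<le> 2 ^ k \<longrightarrow>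
       hdet x n = (-1) ^ n * x (2 ^ k - 1) ^ (2 * n - 2 ^ k) * hdet x (2 ^ k - n))"
proof (intro conjI allI impI)
  have x0: "hseq x 0 = x 0" and x1: "hseq x 1 = x 1"
    using hseq_mersenne[of x 0] hseq_mersenne[of x 1] by simp_all
  show d0: "hdet x 0 = 1"
    by (simp add: hdet_def)
  show "hdet x 1 = x 0"
    using hdet_antidiagonal_reduction[of 0 0 1 x] by (simp add: x0 d0)
  show "hdet x 2 = - (x 1 ^ 2)"
  proof -
    have "hseq x t = 0" if "1 \<le> t" "t \<le> 2" "t \<noteq> 1" for t
      using that hseq_eq_0_between_powers[of 1 t x] by simp
    then show ?thesis
      using hdet_antidiagonal_reduction[of 0 1 2 x] x1 by (simp add: d0 numeral_2_eq_2)
  qed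
next
  fix k n :: nat
  assume "1 < (2::nat) ^ (k - 1) \<and> 2 ^ (k - 1) < n \<and> n \<le> 2 ^ k"
  moreover from this have "k = (k - 1) + 1" "1 \<le> k - 1"
    by (auto intro: ccontr)
  ultimately show "hdet x n = (-1) ^ n * x (2 ^ k - 1) ^ (2 * n - 2 ^ k) * hdet x (2 ^ k - n)"
    using hdet_power_of_two_reduction[of "k - 1" n x] by metis
qed

end
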